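(* For every $k\ge1$, the linear map induced by $T_k$ on the quotient space $V_k/\psi_k(V_1)$ (well defined since $\psi_k(V_1)$ is $T_k$-invariant) is nilpotent.
   Context: Let $\mathcal{A}$ be a finite alphabet of $r$ symbols and $T=(T_{x,y})_{x,y\in\mathcal{A}}$ an $r\times r$ matrix with entries in $\{0,1\}$. For $k\ge1$, an admissible $k$-word is a string $a_1\cdots a_k$ of symbols with $T_{a_{i+1},a_i}=1$ for $1\le i\le k-1$. $V_k$ is the complex vector space with basis $\{[w]\}$ indexed by admissible $k$-words. $\psi_k:V_1\to V_k$ is linear with $\psi_k([a])$ the sum of $[w]$ over all admissible $k$-words $w$ beginning with $a$. $T_k:V_k\to V_k$ is linear with $T_k([a_1\cdots a_k])=\sum[a_2\cdots a_kx]$, summed over all symbols $x$ such that $a_2\cdots a_kx$ is admissible. One has $T_k\circ\psi_k=\psi_k\circ T$, where $T([a])=\sum_{b:T_{b,a}=1}[b]$. *)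

theory Defs
  imports Complex_Main "HOL-Library.Function_Algebras"
begin

definition admissible :: "('a \<Rightarrow> 'a \<Rightarrow> nat) \<Rightarrow> nat \<Rightarrow> 'a list \<Rightarrow> bool" where
  "admissible M k w \<longleftrightarrow> length w = k \<and> (\<forall>i. Suc i < k \<longrightarrow> M (w ! Suc i) (w ! i) = 1)"

definition adm_words :: "('a \<Rightarrow> 'a \<Rightarrow> nat) \<Rightarrow> nat \<Rightarrow> 'a list set" where
  "adm_words M k = {w. admissible M k w}"

text \<open>V_k: complex vector space with basis indexed by admissible k-words, represented
  as coefficient functions supported on admissible k-words.\<close>
definition Vspace :: "('a \<Rightarrow> 'a \<Rightarrow> nat) \<Rightarrow> nat \<Rightarrow> ('a list \<Rightarrow> complex) set" where
  "Vspace M k = {v. \<forall>w. v w \<noteq> 0 \<longrightarrow> admissible M k w}"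

definition bvec :: "'a list \<Rightarrow> ('a list \<Rightarrow> complex)" where
  "bvec w = (\<lambda>u. if u = w then 1 else 0)"

text \<open>V_1 is identified with coefficient functions on symbols ('a \<Rightarrow> complex):
  every 1-word is admissible.\<close>

definition psi_basis :: "('a \<Rightarrow> 'a \<Rightarrow> nat) \<Rightarrow> nat \<Rightarrow> 'a \<Rightarrow> ('a list \<Rightarrow> complex)" where
  "psi_basis M k a = (\<Sum>w\<in>{w\<in>adm_words M k. hd w = a}. bvec w)"

definition psi :: "('a::finite \<Rightarrow> 'a \<Rightarrow> nat) \<Rightarrow> nat \<Rightarrow> ('a \<Rightarrow> complex) \<Rightarrow> ('a list \<Rightarrow> complex)" where
  "psi M k c = (\<lambda>u. \<Sum>a\<in>UNIV. c a * psi_basis M k a u)"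

definition Tk_basis :: "('a::finite \<Rightarrow> 'a \<Rightarrow> nat) \<Rightarrow> nat \<Rightarrow> 'a list \<Rightarrow> ('a list \<Rightarrow> complex)" where
  "Tk_basis M k w = (\<Sum>x\<in>{x. admissible M k (tl w @ [x])}. bvec (tl w @ [x]))"

definition Tk :: "('a::finite \<Rightarrow> 'a \<Rightarrow> nat) \<Rightarrow> nat \<Rightarrow> ('a list \<Rightarrow> complex) \<Rightarrow> ('a list \<Rightarrow> complex)" where
  "Tk M k v = (\<lambda>u. \<Sum>w\<in>adm_words M k. v w * Tk_basis M k w u)"

end

theory Submission imports Defs begin

text \<open>In coordinates, the coefficient of \<open>T\<^sub>k v\<close> at an admissible word \<open>u = u\<^sub>1 \<dots> u\<^sub>k\<close>
  with \<open>k \<ge> 2\<close> is the sum of the coefficients of \<open>v\<close> at the words \<open>a u\<^sub>1 \<dots> u\<^sub>k\<^sub>-\<^sub>1\<close>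
  with \<open>M u\<^sub>1 a = 1\<close>: the last letter of \<open>u\<close> is forgotten and a new first
  letter is summed over. Hence if the coefficients of \<open>v\<close> depend only on the first \<open>n + 1\<close>
  letters of a word, those of \<open>T\<^sub>k v\<close> depend only on the first \<open>n\<close> letters. After \<open>k - 1\<close>
  applications the coefficients depend only on the first letter, and such vectors are exactly
  the image of \<open>\<psi>\<^sub>k\<close>.\<close>

lemma sum_apply: "(\<Sum>x\<in>A. (f x :: 'b \<Rightarrow> 'c::comm_monoid_add)) y = (\<Sum>x\<in>A. f x y)"
  by (induction A rule: infinite_finite_induct) auto

lemma finite_adm_words: "finite (adm_words M k :: 'a::finite list set)"
proof (rule finite_subset)
  show "adm_words M k \<subseteq> {xs. set xs \<subseteq> UNIV \<and> length xs = k}"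
    by (auto simp: adm_words_def admissible_def)
  show "finite {xs. set xs \<subseteq> (UNIV :: 'a set) \<and> length xs = k}"
    by (rule finite_lists_length_eq) simp
qed

lemma admissible_length: "admissible M k u \<Longrightarrow> length u = k"
  by (simp add: admissible_def)

lemma admissible_Cons:
  "admissible M k (a # xs) \<longleftrightarrow>
     k = Suc (length xs) \<and> admissible M (length xs) xs \<and> (xs \<noteq> [] \<longrightarrow> M (hd xs) a = 1)"
  unfolding admissible_def by (cases xs) (auto simp: nth_Cons split: nat.splits)

lemma admissible_butlast: "admissible M k u \<Longrightarrow> admissible M (k - 1) (butlast u)"
  unfolding admissible_def by (auto simp: nth_butlast)

lemma hd_butlast: "butlast xs \<noteq> [] \<Longrightarrow> hd (butlast xs) = hd xs"
  by (cases xs) auto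

lemma psi_apply: "psi M k c u = (if admissible M k u then c (hd u) else 0)"
proof -
  have "psi_basis M k a u = (if admissible M k u \<and> hd u = a then 1 else 0)" for a
    unfolding psi_basis_def bvec_def sum_apply
    using finite_adm_words[of M k] by (simp add: sum.delta adm_words_def)
  then show ?thesis
    by (cases "admissible M k u")
      (simp_all add: psi_def eq_commute[of "hd u"] if_distrib[where f = "(*) _"] cong: if_cong)
qed

lemma Tk_basis_apply:
  "Tk_basis M k w u = (if admissible M k u \<and> u \<noteq> [] \<and> butlast u = tl w then 1 else 0)"
proof -
  have "Tk_basis M k w u =
      (\<Sum>x\<in>{x. admissible M k (tl w @ [x])}.
         if x = last u then (if u \<noteq> [] \<and> butlast u = tl w then 1 else 0) else 0)"
    unfolding Tk_basis_def bvec_def sum_apply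
    by (intro sum.cong refl) (metis snoc_eq_iff_butlast)
  also have "\<dots> = (if admissible M k u \<and> u \<noteq> [] \<and> butlast u = tl w then 1 else 0)"
  proof (cases "u \<noteq> [] \<and> butlast u = tl w")
    case True
    then have "tl w @ [last u] = u"
      by (metis append_butlast_last_id)
    with True show ?thesis
      by (simp add: sum.delta)
  qed auto
  finally show ?thesis .
qed

lemma Tk_apply:
  fixes M :: "'a::finite \<Rightarrow> 'a \<Rightarrow> nat"
  assumes "k \<ge> 2"
  shows "Tk M k v u =
    (if admissible M k u then \<Sum>a\<in>{a. M (hd u) a = 1}. v (a # butlast u) else 0)"
proof (cases "admissible M k u")
  case True
  then have "length u = k" by (rule admissible_length)
  with assms have ne: "u \<noteq> []" "butlast u \<noteq> []"
    by (auto simp flip: length_greater_0_conv)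
  have adm_butlast: "admissible M (length (butlast u)) (butlast u)"
    using admissible_butlast[OF True] \<open>length u = k\<close> by simp
  have predecessors: "{w \<in> adm_words M k. tl w = butlast u} =
      (\<lambda>a. a # butlast u) ` {a. M (hd u) a = 1}"
  proof (intro set_eqI iffI)
    fix w assume w: "w \<in> {w \<in> adm_words M k. tl w = butlast u}"
    then have "w = hd w # butlast u"
      using assms by (cases w) (auto simp: adm_words_def admissible_def)
    with w ne hd_butlast[OF ne(2)] show "w \<in> (\<lambda>a. a # butlast u) ` {a. M (hd u) a = 1}"
      by (metis (mono_tags, lifting) admissible_Cons adm_words_def image_eqI mem_Collect_eq)
  next
    fix w assume "w \<in> (\<lambda>a. a # butlast u) ` {a. M (hd u) a = 1}"
    then show "w \<in> {w \<in> adm_words M k. tl w = butlast u}"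
      using ne hd_butlast[OF ne(2)] adm_butlast \<open>length u = k\<close> assms
      by (auto simp: adm_words_def admissible_Cons)
  qed
  have "Tk M k v u = (\<Sum>w\<in>{w \<in> adm_words M k. tl w = butlast u}. v w)"
    unfolding Tk_def Tk_basis_apply
    using True ne finite_adm_words[of M k]
    by (simp add: sum.inter_filter eq_commute if_distrib[where f = "(*) _"] cong: if_cong)
  also have "\<dots> = (\<Sum>a\<in>{a. M (hd u) a = 1}. v (a # butlast u))"
    unfolding predecessors by (simp add: sum.reindex inj_on_def)
  finally show ?thesis using True by simp
qed (simp add: Tk_def Tk_basis_apply)

definition prefix_determined ::
    "('a \<Rightarrow> 'a \<Rightarrow> nat) \<Rightarrow> nat \<Rightarrow> nat \<Rightarrow> ('a list \<Rightarrow> complex) \<Rightarrow> bool" where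
  "prefix_determined M k n v \<longleftrightarrow> v \<in> Vspace M k \<and>
     (\<forall>u u'. admissible M k u \<longrightarrow> admissible M k u' \<longrightarrow> take n u = take n u' \<longrightarrow> v u = v u')"

lemma Vspace_prefix_determined: "v \<in> Vspace M k \<Longrightarrow> prefix_determined M k k v"
  by (simp add: prefix_determined_def admissible_length)

lemma prefix_determined_Tk:
  fixes M :: "'a::finite \<Rightarrow> 'a \<Rightarrow> nat"
  assumes v: "prefix_determined M k (Suc n) v" and "n \<ge> 1" and "k \<ge> 2"
  shows "prefix_determined M k n (Tk M k v)"
  unfolding prefix_determined_def
proof (intro conjI allI impI)
  show "Tk M k v \<in> Vspace M k"
    using \<open>k \<ge> 2\<close> by (auto simp: Vspace_def Tk_apply split: if_splits)
next
  fix u u' assume u: "admissible M k u" and u': "admissible M k u'"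
    and same_prefix: "take n u = take n u'"
  have "length u = length u'"
    using u u' by (simp add: admissible_length)
  have "hd u = hd u'"
    using arg_cong[OF same_prefix, of hd] \<open>n \<ge> 1\<close> by simp
  have "take n (butlast u) = take n (butlast u')"
    using same_prefix \<open>length u = length u'\<close>
    by (metis butlast_conv_take min.commute take_take)
  have "v (a # butlast u) = v (a # butlast u')" if "M (hd u) a = 1" for a
  proof -
    have "admissible M k (a # butlast w)" if "admissible M k w" "hd w = hd u" for w
      using that \<open>M (hd u) a = 1\<close> admissible_butlast[of M k w] admissible_length[of M k w] \<open>k \<ge> 2\<close>
      by (auto simp: admissible_Cons hd_butlast)
    with u u' \<open>hd u = hd u'\<close> \<open>take n (butlast u) = take n (butlast u')\<close> v show ?thesis
      by (auto simp: prefix_determined_def)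
  qed
  then show "Tk M k v u = Tk M k v u'"
    using u u' \<open>hd u = hd u'\<close> \<open>k \<ge> 2\<close> by (simp add: Tk_apply)
qed

lemma prefix_determined_Tk_power:
  fixes M :: "'a::finite \<Rightarrow> 'a \<Rightarrow> nat"
  assumes "v \<in> Vspace M k" and "j \<le> k - 1"
  shows "prefix_determined M k (k - j) ((Tk M k ^^ j) v)"
  using \<open>j \<le> k - 1\<close>
proof (induction j)
  case 0
  then show ?case using Vspace_prefix_determined[OF assms(1)] by simp
next
  case (Suc j)
  then have "prefix_determined M k (Suc (k - Suc j)) ((Tk M k ^^ j) v)"
    by (simp add: Suc_diff_Suc)
  with Suc.prems show ?case
    by (simp add: prefix_determined_Tk)
qed

lemma prefix_determined_one_in_range_psi:
  assumes "prefix_determined M k 1 v"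
  shows "v \<in> range (psi M k)"
proof -
  define c where "c a = v (SOME u. admissible M k u \<and> hd u = a)" for a
  have "psi M k c u = v u" for u
  proof (cases "admissible M k u")
    case True
    define u' where "u' = (SOME u'. admissible M k u' \<and> hd u' = hd u)"
    have u': "admissible M k u' \<and> hd u' = hd u"
      unfolding u'_def by (rule someI[of _ u]) (simp add: True)
    have "take 1 u' = take 1 u"
      using u' admissible_length[OF True] admissible_length[of M k u']
      by (cases u; cases u') auto
    with assms True u' have "v u' = v u"
      unfolding prefix_determined_def by blast
    then show ?thesis
      using True by (simp add: psi_apply c_def u'_def)
  next
    case False
    moreover have "v \<in> Vspace M k"
      using assms by (simp add: prefix_determined_def)
    ultimately show ?thesis
      by (auto simp: psi_apply Vspace_def)
  qed
  then have "psi M k c = v" ..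
  then show ?thesis
    by (metis rangeI)
qed

theorem lemma1p2:
  fixes M :: "'a::finite \<Rightarrow> 'a \<Rightarrow> nat" and k :: nat
  assumes "\<forall>x y. M x y \<in> {0, 1}"
    and "k \<ge> 1"
  shows "\<exists>m. \<forall>v\<in>Vspace M k. (Tk M k ^^ m) v \<in> psi M k ` UNIV"
proof -
  have "(Tk M k ^^ (k - 1)) v \<in> range (psi M k)" if "v \<in> Vspace M k" for v
    using prefix_determined_Tk_power[OF that, of "k - 1"] \<open>k \<ge> 1\<close>
    by (intro prefix_determined_one_in_range_psi) simp
  then show ?thesis by blast
qed

end
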